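(* Let $(R,\mathfrak{m},k)$ be a commutative Noetherian local ring and let $\mathbf{F}$ be a minimal free resolution of $k$ over $R$. Then $\mathfrak{m}^*\operatorname{H}_n(\operatorname{lin}^R(\mathbf{F}))=0$ for all $n$, where $\mathfrak{m}^*$ is the homogeneous maximal ideal of $R^{\mathsf g}$.
   Context: $R^{\mathsf g}=\bigoplus_{i\ge0}\mathfrak{m}^i/\mathfrak{m}^{i+1}$ is the associated graded ring and $\mathfrak{m}^*=\bigoplus_{i\ge1}\mathfrak{m}^i/\mathfrak{m}^{i+1}$. A minimal free resolution $\mathbf{F}:\cdots\to F_n\xrightarrow{\partial_n}F_{n-1}\to\cdots\to F_0\to0$ consists of finitely generated free modules with $\partial(F_i)\subseteq\mathfrak{m}F_{i-1}$. The linear part $\operatorname{lin}^R(\mathbf{F})$ is the associated graded complex of the filtration $(\mathfrak{F}^p\mathbf{F})_i=\mathfrak{m}^{p-i}F_i$ ($\mathfrak{m}^j=R$ for $j\le0$); it is a complex of graded free $R^{\mathsf g}$-modules with $\operatorname{lin}^R_n(\mathbf{F})=F_n^{\mathsf g}(-n)$, $F_n^{\mathsf g}=\bigoplus_{i\ge0}\mathfrak{m}^iF_n/\mathfrak{m}^{i+1}F_n$, and differential sending the class of $x\in\mathfrak{m}^iF_n$ to the class of $\partial(x)$ in $\mathfrak{m}^{i+1}F_{n-1}/\mathfrak{m}^{i+2}F_{n-1}$. *)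

theory Defs
  imports Main
begin

definition is_ideal :: "'a::comm_ring_1 set \<Rightarrow> bool" where
  "is_ideal I \<longleftrightarrow> 0 \<in> I \<and> (\<forall>x\<in>I. \<forall>y\<in>I. x + y \<in> I) \<and> (\<forall>r. \<forall>x\<in>I. r * x \<in> I)"

definition ideal_span :: "'a::comm_ring_1 set \<Rightarrow> 'a set" where
  "ideal_span S = {y. \<exists>r. y = (\<Sum>s\<in>S. r s * s)}"

definition noetherian_ring :: "'a::comm_ring_1 itself \<Rightarrow> bool" where
  "noetherian_ring _ \<longleftrightarrow>
     (\<forall>I::'a set. is_ideal I \<longrightarrow> (\<exists>S. finite S \<and> S \<subseteq> I \<and> I = ideal_span S))"

definition local_ring_max :: "'a::comm_ring_1 set \<Rightarrow> bool" where
  "local_ring_max m \<longleftrightarrow> is_ideal m \<and> 1 \<notin> m \<and>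
     (\<forall>I. is_ideal I \<and> 1 \<notin> I \<longrightarrow> I \<subseteq> m)"

inductive_set ideal_prod :: "'a::comm_ring_1 set \<Rightarrow> 'a set \<Rightarrow> 'a set" for I J where
  zero: "0 \<in> ideal_prod I J"
| step: "a \<in> I \<Longrightarrow> c \<in> J \<Longrightarrow> y \<in> ideal_prod I J \<Longrightarrow> a * c + y \<in> ideal_prod I J"

primrec ideal_pow :: "'a::comm_ring_1 set \<Rightarrow> nat \<Rightarrow> 'a set" where
  "ideal_pow m 0 = UNIV"
| "ideal_pow m (Suc i) = ideal_prod m (ideal_pow m i)"

text \<open>The free module F_n = R^(b n), as vectors nat => R supported below b n.
  The differential d_n : F_n -> F_(n-1) (n >= 1) is the (b(n-1)) x (b n) matrix d n;
  d_0 = 0.\<close>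

definition free_mod :: "(nat \<Rightarrow> nat) \<Rightarrow> nat \<Rightarrow> (nat \<Rightarrow> 'a::comm_ring_1) set" where
  "free_mod b n = {x. \<forall>j\<ge>b n. x j = 0}"

definition diff :: "(nat \<Rightarrow> nat) \<Rightarrow> (nat \<Rightarrow> nat \<Rightarrow> nat \<Rightarrow> 'a::comm_ring_1) \<Rightarrow> nat
                     \<Rightarrow> (nat \<Rightarrow> 'a) \<Rightarrow> (nat \<Rightarrow> 'a)" where
  "diff b d n x = (\<lambda>i. if n = 0 \<or> i \<ge> b (n - 1) then 0 else (\<Sum>j<b n. d n i j * x j))"

definition in_pow_mod :: "'a::comm_ring_1 set \<Rightarrow> nat \<Rightarrow> (nat \<Rightarrow> 'a) \<Rightarrow> bool" where
  "in_pow_mod m p x \<longleftrightarrow> (\<forall>j. x j \<in> ideal_pow m p)"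

text \<open>The augmentation
  F_0 -> k is given as x |-> (eps x mod m) for an R-linear eps : F_0 -> R
  (any R-linear map from a free module to k lifts this way).\<close>
definition minimal_free_resolution_of_residue_field ::
  "'a::comm_ring_1 set \<Rightarrow> (nat \<Rightarrow> nat) \<Rightarrow> (nat \<Rightarrow> nat \<Rightarrow> nat \<Rightarrow> 'a) \<Rightarrow> ((nat \<Rightarrow> 'a) \<Rightarrow> 'a) \<Rightarrow> bool"
where
  "minimal_free_resolution_of_residue_field m b d eps \<longleftrightarrow>
     \<comment> \<open>minimality: all matrix entries of each differential lie in m\<close>
     (\<forall>n\<ge>1. \<forall>i<b (n - 1). \<forall>j<b n. d n i j \<in> m) \<and>
     \<comment> \<open>exactness at F_n, n >= 1 (includes d o d = 0)\<close>
     (\<forall>n\<ge>1. {x \<in> free_mod b n. diff b d n x = (\<lambda>_. 0)} = diff b d (Suc n) ` free_mod b (Suc n)) \<and>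
     \<comment> \<open>augmentation eps : F_0 -> R is R-linear\<close>
     (\<forall>x\<in>free_mod b 0. \<forall>y\<in>free_mod b 0. eps (\<lambda>j. x j + y j) = eps x + eps y) \<and>
     (\<forall>r. \<forall>x\<in>free_mod b 0. eps (\<lambda>j. r * x j) = r * eps x) \<and>
     \<comment> \<open>F_0 -> k is surjective\<close>
     (\<exists>x\<in>free_mod b 0. eps x \<notin> m) \<and>
     \<comment> \<open>its kernel is the image of d_1\<close>
     {x \<in> free_mod b 0. eps x \<in> m} = diff b d 1 ` free_mod b 1"

text \<open>The piece of lin_n(F) coming from m^p F_n / m^(p+1) F_n (p >= 0).
  The class of z in m^p F_n is a cycle iff d z lies in m^(p+2) F_(n-1);
  it is a boundary iff z - d y lies in m^(p+1) F_n for some y in m^(p-1) F_(n+1)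
  (m^j = R for j <= 0).  Each H_n(lin) is a graded R^g-module, generated by classes
  of homogeneous cycles, and m^* is generated (as a set of sums) by homogeneous
  elements, i.e. classes of a in m^i, i >= 1.  The class of a in m^i/m^(i+1) acts
  on the class of z in m^p F_n/m^(p+1) F_n giving the class of a z in
  m^(p+i) F_n/m^(p+i+1) F_n.\<close>

definition lin_cycle :: "'a::comm_ring_1 set \<Rightarrow> (nat \<Rightarrow> nat) \<Rightarrow> (nat \<Rightarrow> nat \<Rightarrow> nat \<Rightarrow> 'a)
                          \<Rightarrow> nat \<Rightarrow> nat \<Rightarrow> (nat \<Rightarrow> 'a) \<Rightarrow> bool" where
  "lin_cycle m b d n p z \<longleftrightarrow> z \<in> free_mod b n \<and> in_pow_mod m p z \<and>
      in_pow_mod m (p + 2) (diff b d n z)"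

definition lin_boundary_class :: "'a::comm_ring_1 set \<Rightarrow> (nat \<Rightarrow> nat) \<Rightarrow> (nat \<Rightarrow> nat \<Rightarrow> nat \<Rightarrow> 'a)
                          \<Rightarrow> nat \<Rightarrow> nat \<Rightarrow> (nat \<Rightarrow> 'a) \<Rightarrow> bool" where
  "lin_boundary_class m b d n p z \<longleftrightarrow>
     (\<exists>y\<in>free_mod b (Suc n). in_pow_mod m (p - 1) y \<and>
        in_pow_mod m (p + 1) (\<lambda>j. z j - diff b d (Suc n) y j))"

definition mstar_kills_lin_homology :: "'a::comm_ring_1 set \<Rightarrow> (nat \<Rightarrow> nat)
                          \<Rightarrow> (nat \<Rightarrow> nat \<Rightarrow> nat \<Rightarrow> 'a) \<Rightarrow> nat \<Rightarrow> bool" where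
  "mstar_kills_lin_homology m b d n \<longleftrightarrow>
     (\<forall>p i a z. 1 \<le> i \<longrightarrow> a \<in> ideal_pow m i \<longrightarrow> lin_cycle m b d n p z \<longrightarrow>
        lin_boundary_class m b d n (p + i) (\<lambda>j. a * z j))"

end

theory Submission
  imports Defs
begin

text \<open>Multiplication by any x \<in> m is null-homotopic on a free resolution of k = R/m, since x
  annihilates k: there are R-linear maps h with d h + h d = x.  Being R-linear, h maps
  m^q F into m^q F.  So if z \<in> m^p F_n is a cycle of the linear part, i.e.
  d z \<in> m^(p+2) F_(n-1), then x z = d (h z) + h (d z) with h z \<in> m^p F_(n+1) and
  h (d z) \<in> m^(p+2) F_n, so the class of x z is a boundary.  Every element of m^i,
  i \<ge> 1, is a sum of products x c with x \<in> m and c \<in> m^(i-1), and boundary classes are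
  closed under sums and under multiplication by such c.\<close>

lemma ideal_prod_add:
  assumes "u \<in> ideal_prod I J" "v \<in> ideal_prod I J"
  shows "u + v \<in> ideal_prod I J"
  using assms
proof (induction u rule: ideal_prod.induct)
  case zero then show ?case by simp
next
  case (step a c y)
  then have "a * c + (y + v) \<in> ideal_prod I J" by (intro ideal_prod.step) auto
  then show ?case by (simp add: add.assoc)
qed

lemma ideal_prod_mult_left:
  assumes "is_ideal J" "u \<in> ideal_prod I J"
  shows "r * u \<in> ideal_prod I J"
  using assms(2)
proof (induction u rule: ideal_prod.induct)
  case zero then show ?case by (simp add: ideal_prod.zero)
next
  case (step a c y)
  have "r * c \<in> J" using assms(1) step by (auto simp: is_ideal_def)
  then have "a * (r * c) + r * y \<in> ideal_prod I J" using step by (intro ideal_prod.step) auto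
  then show ?case by (simp add: algebra_simps)
qed

lemma is_ideal_ideal_pow: "is_ideal (ideal_pow m k)"
proof (induction k)
  case 0 then show ?case by (simp add: is_ideal_def)
next
  case (Suc k)
  then show ?case
    by (auto simp: is_ideal_def intro: ideal_prod.zero ideal_prod_add ideal_prod_mult_left)
qed

lemma ideal_pow_zero_mem: "0 \<in> ideal_pow m k"
  using is_ideal_ideal_pow[of m k] by (simp add: is_ideal_def)

lemma ideal_pow_add_mem: "u \<in> ideal_pow m k \<Longrightarrow> v \<in> ideal_pow m k \<Longrightarrow> u + v \<in> ideal_pow m k"
  using is_ideal_ideal_pow[of m k] by (simp add: is_ideal_def)

lemma ideal_pow_mult_left_mem: "u \<in> ideal_pow m k \<Longrightarrow> r * u \<in> ideal_pow m k"
  using is_ideal_ideal_pow[of m k] by (simp add: is_ideal_def)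

lemma ideal_pow_mult_right_mem: "u \<in> ideal_pow m k \<Longrightarrow> u * r \<in> ideal_pow m k"
  using ideal_pow_mult_left_mem[of u m k r] by (simp add: mult.commute)

lemma ideal_pow_sum_mem: "(\<And>j. j \<in> A \<Longrightarrow> f j \<in> ideal_pow m k) \<Longrightarrow> sum f A \<in> ideal_pow m k"
  by (induction A rule: infinite_finite_induct) (simp_all add: ideal_pow_zero_mem ideal_pow_add_mem)

lemma ideal_pow_mult_mem:
  "u \<in> ideal_pow m k \<Longrightarrow> v \<in> ideal_pow m l \<Longrightarrow> u * v \<in> ideal_pow m (k + l)"
proof (induction k arbitrary: u)
  case 0 then show ?case by (simp add: ideal_pow_mult_left_mem)
next
  case (Suc k)
  have "u \<in> ideal_prod m (ideal_pow m k)" using Suc.prems by simp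
  then have "u * v \<in> ideal_prod m (ideal_pow m (k + l))"
  proof (induction u rule: ideal_prod.induct)
    case zero then show ?case by (simp add: ideal_prod.zero)
  next
    case (step a c y)
    have "c * v \<in> ideal_pow m (k + l)" using Suc.IH step Suc.prems by auto
    then have "a * (c * v) + y * v \<in> ideal_prod m (ideal_pow m (k + l))"
      using step by (intro ideal_prod.step) auto
    then show ?case by (simp add: algebra_simps)
  qed
  then show ?case by simp
qed

lemma in_pow_mod_zero: "in_pow_mod m q (\<lambda>_. 0)"
  by (simp add: in_pow_mod_def ideal_pow_zero_mem)

lemma in_pow_mod_add:
  "in_pow_mod m q u \<Longrightarrow> in_pow_mod m q v \<Longrightarrow> in_pow_mod m q (\<lambda>j. u j + v j)"
  by (simp add: in_pow_mod_def ideal_pow_add_mem)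

lemma in_pow_mod_scale:
  "c \<in> ideal_pow m k \<Longrightarrow> in_pow_mod m q u \<Longrightarrow> in_pow_mod m (k + q) (\<lambda>j. c * u j)"
  by (simp add: in_pow_mod_def ideal_pow_mult_mem)

lemma diff_add: "diff b d n (\<lambda>k. u k + v k) = (\<lambda>k. diff b d n u k + diff b d n v k)"
  unfolding diff_def by (auto simp: sum.distrib algebra_simps intro!: ext)

lemma diff_scale: "diff b d n (\<lambda>k. c * u k) = (\<lambda>k. c * diff b d n u k)"
  unfolding diff_def by (auto simp: sum_distrib_left algebra_simps intro!: ext)

lemma diff_minus: "diff b d n (\<lambda>k. u k - v k) = (\<lambda>k. diff b d n u k - diff b d n v k)"
  unfolding diff_def by (auto simp: sum_subtractf algebra_simps intro!: ext)

lemma diff_zero: "diff b d n (\<lambda>_. 0) = (\<lambda>_. 0)"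
  unfolding diff_def by auto

lemma diff_in_free_mod: "diff b d (Suc n) y \<in> free_mod b n"
  unfolding diff_def free_mod_def by auto

lemma diff_sum:
  "diff b d n (\<lambda>k. \<Sum>j<c. w j * C j k) = (\<lambda>k. \<Sum>j<c. w j * diff b d n (C j) k)"
  unfolding diff_def by (auto simp: sum_distrib_left algebra_simps intro!: ext sum.swap)

lemma lin_boundary_class_zero: "lin_boundary_class m b d n q (\<lambda>_. 0)"
  unfolding lin_boundary_class_def
  by (rule bexI[of _ "\<lambda>_. 0"]) (simp_all add: diff_zero in_pow_mod_zero free_mod_def)

lemma lin_boundary_class_add:
  assumes "lin_boundary_class m b d n q u" "lin_boundary_class m b d n q v"
  shows "lin_boundary_class m b d n q (\<lambda>j. u j + v j)"
proof -
  obtain y1 where y1: "y1 \<in> free_mod b (Suc n)" "in_pow_mod m (q - 1) y1"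
      "in_pow_mod m (q + 1) (\<lambda>j. u j - diff b d (Suc n) y1 j)"
    using assms(1) by (auto simp: lin_boundary_class_def)
  obtain y2 where y2: "y2 \<in> free_mod b (Suc n)" "in_pow_mod m (q - 1) y2"
      "in_pow_mod m (q + 1) (\<lambda>j. v j - diff b d (Suc n) y2 j)"
    using assms(2) by (auto simp: lin_boundary_class_def)
  have "(\<lambda>j. u j + v j - diff b d (Suc n) (\<lambda>k. y1 k + y2 k) j)
      = (\<lambda>j. (u j - diff b d (Suc n) y1 j) + (v j - diff b d (Suc n) y2 j))"
    by (simp add: diff_add algebra_simps)
  with y1 y2 show ?thesis
    unfolding lin_boundary_class_def
    by (intro bexI[of _ "\<lambda>k. y1 k + y2 k"]) (auto simp: free_mod_def in_pow_mod_add)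
qed

lemma lin_boundary_class_scale:
  assumes "lin_boundary_class m b d n (Suc q) u" and c: "c \<in> ideal_pow m k"
  shows "lin_boundary_class m b d n (Suc q + k) (\<lambda>j. c * u j)"
proof -
  obtain y where y: "y \<in> free_mod b (Suc n)" "in_pow_mod m q y"
      "in_pow_mod m (Suc q + 1) (\<lambda>j. u j - diff b d (Suc n) y j)"
    using assms(1) by (auto simp: lin_boundary_class_def)
  have "(\<lambda>j. c * u j - diff b d (Suc n) (\<lambda>k. c * y k) j)
      = (\<lambda>j. c * (u j - diff b d (Suc n) y j))"
    by (simp add: diff_scale algebra_simps)
  with y in_pow_mod_scale[OF c y(2)] in_pow_mod_scale[OF c y(3)] show ?thesis
    unfolding lin_boundary_class_def
    by (intro bexI[of _ "\<lambda>k. c * y k"]) (auto simp: free_mod_def add.commute)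
qed

lemma some_preimage:
  assumes "t \<in> f ` A"
  shows "(SOME y. y \<in> A \<and> f y = t) \<in> A \<and> f (SOME y. y \<in> A \<and> f y = t) = t"
proof -
  from assms obtain y where "y \<in> A \<and> f y = t" by blast
  then show ?thesis by (rule someI)
qed

definition evec :: "nat \<Rightarrow> nat \<Rightarrow> 'a::comm_ring_1" where
  "evec j = (\<lambda>k. if k = j then 1 else 0)"

definition lin_ext :: "(nat \<Rightarrow> nat \<Rightarrow> 'a::comm_ring_1) \<Rightarrow> nat \<Rightarrow> (nat \<Rightarrow> 'a) \<Rightarrow> (nat \<Rightarrow> 'a)" where
  "lin_ext C c w = (\<lambda>i. \<Sum>j<c. w j * C j i)"

lemma evec_in_free_mod: "j < b n \<Longrightarrow> evec j \<in> free_mod b n"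
  unfolding evec_def free_mod_def by auto

lemma free_mod_eq_sum_evec:
  assumes "w \<in> free_mod b n"
  shows "w = (\<lambda>k. \<Sum>j<b n. w j * evec j k)"
proof
  fix k
  show "w k = (\<Sum>j<b n. w j * evec j k)"
  proof (cases "k < b n")
    case True
    have "(\<Sum>j<b n. w j * evec j k) = (\<Sum>j\<in>{k}. w j * evec j k)"
      by (rule sum.mono_neutral_right) (auto simp: evec_def True)
    then show ?thesis by (simp add: evec_def)
  next
    case False
    then show ?thesis using assms by (auto simp: free_mod_def evec_def intro!: sum.neutral)
  qed
qed

lemma lin_ext_sum:
  "lin_ext C c' (\<lambda>k. \<Sum>j<c. w j * V j k) = (\<lambda>k. \<Sum>j<c. w j * lin_ext C c' (V j) k)"
  unfolding lin_ext_def
  by (auto simp: sum_distrib_left sum_distrib_right algebra_simps intro!: ext sum.swap)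

lemma lin_ext_zero: "lin_ext C c (\<lambda>_. 0) = (\<lambda>_. 0)"
  unfolding lin_ext_def by auto

lemma in_pow_mod_lin_ext: "in_pow_mod m q w \<Longrightarrow> in_pow_mod m q (lin_ext C c w)"
  unfolding in_pow_mod_def lin_ext_def by (auto intro!: ideal_pow_sum_mem ideal_pow_mult_right_mem)

lemma lin_ext_in_free_mod: "(\<And>j. j < c \<Longrightarrow> C j \<in> free_mod b n) \<Longrightarrow> lin_ext C c w \<in> free_mod b n"
  unfolding lin_ext_def free_mod_def by (auto intro!: sum.neutral)

text \<open>homotopy b d x n is indexed by its target: it maps F_(n-1) to F_n, and
  homotopy b d x 0 = 0 plays the role of the map out of F_(-1) = 0.\<close>
primrec homotopy_col :: "(nat \<Rightarrow> nat) \<Rightarrow> (nat \<Rightarrow> nat \<Rightarrow> nat \<Rightarrow> 'a::comm_ring_1) \<Rightarrow> 'a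
                \<Rightarrow> nat \<Rightarrow> nat \<Rightarrow> (nat \<Rightarrow> 'a)" where
  "homotopy_col b d x 0 = (\<lambda>j. SOME y. y \<in> free_mod b 1 \<and> diff b d 1 y = (\<lambda>k. x * evec j k))"
| "homotopy_col b d x (Suc n) = (\<lambda>j. SOME y. y \<in> free_mod b (Suc (Suc n)) \<and>
       diff b d (Suc (Suc n)) y =
         (\<lambda>k. x * evec j k - lin_ext (homotopy_col b d x n) (b n) (diff b d (Suc n) (evec j)) k))"

primrec homotopy :: "(nat \<Rightarrow> nat) \<Rightarrow> (nat \<Rightarrow> nat \<Rightarrow> nat \<Rightarrow> 'a::comm_ring_1) \<Rightarrow> 'a
                \<Rightarrow> nat \<Rightarrow> (nat \<Rightarrow> 'a) \<Rightarrow> (nat \<Rightarrow> 'a)" where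
  "homotopy b d x 0 = (\<lambda>w. (\<lambda>_. 0))"
| "homotopy b d x (Suc n) = lin_ext (homotopy_col b d x n) (b n)"

lemma homotopy_col_eq:
  "homotopy_col b d x n = (\<lambda>j. SOME y. y \<in> free_mod b (Suc n) \<and>
       diff b d (Suc n) y = (\<lambda>k. x * evec j k - homotopy b d x n (diff b d n (evec j)) k))"
  by (cases n) simp_all

lemma homotopy_sum:
  "homotopy b d x n (\<lambda>k. \<Sum>j<c. w j * V j k) = (\<lambda>k. \<Sum>j<c. w j * homotopy b d x n (V j) k)"
  by (cases n) (simp_all add: lin_ext_sum)

lemma homotopy_zero: "homotopy b d x n (\<lambda>_. 0) = (\<lambda>_. 0)"
  by (cases n) (simp_all add: lin_ext_zero)

lemma in_pow_mod_homotopy: "in_pow_mod m q w \<Longrightarrow> in_pow_mod m q (homotopy b d x n w)"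
  by (cases n) (simp_all add: in_pow_mod_zero in_pow_mod_lin_ext)

lemma homotopy_identity_if_cols:
  assumes cols: "\<And>j. j < b n \<Longrightarrow> diff b d (Suc n) (homotopy_col b d x n j)
                    = (\<lambda>k. x * evec j k - homotopy b d x n (diff b d n (evec j)) k)"
    and w: "w \<in> free_mod b n"
  shows "diff b d (Suc n) (homotopy b d x (Suc n) w) = (\<lambda>k. x * w k - homotopy b d x n (diff b d n w) k)"
proof -
  have w_sum: "w = (\<lambda>k. \<Sum>j<b n. w j * evec j k)" by (rule free_mod_eq_sum_evec[OF w])
  then have w_sum_at: "(\<Sum>j<b n. w j * evec j k) = w k" for k by metis
  have dw: "diff b d n w = (\<lambda>k. \<Sum>j<b n. w j * diff b d n (evec j) k)"
    by (subst w_sum) (simp add: diff_sum)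
  have "diff b d (Suc n) (homotopy b d x (Suc n) w)
      = (\<lambda>k. \<Sum>j<b n. w j * diff b d (Suc n) (homotopy_col b d x n j) k)"
    by (simp add: lin_ext_def diff_sum)
  also have "\<dots> = (\<lambda>k. \<Sum>j<b n. w j * (x * evec j k - homotopy b d x n (diff b d n (evec j)) k))"
    using cols by (auto intro!: ext sum.cong)
  also have "\<dots> = (\<lambda>k. x * (\<Sum>j<b n. w j * evec j k)
        - homotopy b d x n (\<lambda>k. \<Sum>j<b n. w j * diff b d n (evec j) k) k)"
    by (simp add: homotopy_sum sum_distrib_left sum_subtractf algebra_simps)
  also have "\<dots> = (\<lambda>k. x * w k - homotopy b d x n (diff b d n w) k)"
    by (simp only: dw w_sum_at)
  finally show ?thesis .
qed

context
  fixes m :: "'a::comm_ring_1 set" and b d eps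
  assumes res: "minimal_free_resolution_of_residue_field m b d eps"
begin

lemma resolution_exact:
  "n \<ge> 1 \<Longrightarrow> {z \<in> free_mod b n. diff b d n z = (\<lambda>_. 0)} = diff b d (Suc n) ` free_mod b (Suc n)"
  using res unfolding minimal_free_resolution_of_residue_field_def by (elim conjE) simp

lemma resolution_augmentation_kernel: "{z \<in> free_mod b 0. eps z \<in> m} = diff b d 1 ` free_mod b 1"
  using res unfolding minimal_free_resolution_of_residue_field_def by (elim conjE) assumption

lemma augmentation_scale: "z \<in> free_mod b 0 \<Longrightarrow> eps (\<lambda>j. r * z j) = r * eps z"
  using res unfolding minimal_free_resolution_of_residue_field_def by (elim conjE) blast

lemma augmented_cycle_is_boundary:
  assumes t: "t \<in> free_mod b n" "diff b d n t = (\<lambda>_. 0)" "n = 0 \<Longrightarrow> eps t \<in> m"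
  shows "t \<in> diff b d (Suc n) ` free_mod b (Suc n)"
proof (cases n)
  case 0
  with t resolution_augmentation_kernel show ?thesis by auto
next
  case (Suc n')
  with t resolution_exact[of n] show ?thesis by auto
qed

lemma diff_diff: "y \<in> free_mod b (Suc n) \<Longrightarrow> diff b d n (diff b d (Suc n) y) = (\<lambda>_. 0)"
proof (cases n)
  case 0 then show ?thesis by (simp add: diff_def)
next
  case (Suc n')
  assume "y \<in> free_mod b (Suc n)"
  with Suc resolution_exact[of n] show ?thesis by auto
qed

context
  fixes x
  assumes m_ideal: "is_ideal m" and x_in_m: "x \<in> m"
begin

lemma homotopy_col_spec:
  "j < b n \<Longrightarrow> homotopy_col b d x n j \<in> free_mod b (Suc n) \<and>
     diff b d (Suc n) (homotopy_col b d x n j)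
       = (\<lambda>k. x * evec j k - homotopy b d x n (diff b d n (evec j)) k)"
proof (induction n arbitrary: j)
  case 0
  let ?t = "\<lambda>k. x * evec j k"
  have "?t \<in> free_mod b 0" using "0.prems" by (simp add: free_mod_def evec_def)
  moreover have "diff b d 0 ?t = (\<lambda>_. 0)" by (simp add: diff_def)
  moreover have "eps ?t \<in> m"
    using augmentation_scale[OF evec_in_free_mod[of j b 0, OF "0.prems"], of x] m_ideal x_in_m
    by (metis is_ideal_def mult.commute)
  ultimately have "?t \<in> diff b d 1 ` free_mod b 1"
    using augmented_cycle_is_boundary[of ?t 0] by simp
  from some_preimage[OF this] show ?case by (simp add: homotopy_col_eq[of b d x 0])
next
  case (Suc n)
  let ?v = "diff b d (Suc n) (evec j)"
  let ?t = "\<lambda>k. x * evec j k - homotopy b d x (Suc n) ?v k"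
  have v: "?v \<in> free_mod b n" by (rule diff_in_free_mod)
  have "homotopy b d x (Suc n) ?v \<in> free_mod b (Suc n)"
    using Suc.IH by (simp add: lin_ext_in_free_mod)
  with Suc.prems have t_free: "?t \<in> free_mod b (Suc n)" by (simp add: free_mod_def evec_def)
  have "diff b d (Suc n) ?t = (\<lambda>k. x * ?v k - diff b d (Suc n) (homotopy b d x (Suc n) ?v) k)"
    by (simp add: diff_minus diff_scale)
  also have "\<dots> = (\<lambda>_. 0)"
    using homotopy_identity_if_cols[OF _ v] Suc.IH
      diff_diff[OF evec_in_free_mod[of j b "Suc n", OF Suc.prems]]
    by (simp add: homotopy_zero)
  finally have "?t \<in> diff b d (Suc (Suc n)) ` free_mod b (Suc (Suc n))"
    using augmented_cycle_is_boundary[OF t_free] by simp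
  from some_preimage[OF this] show ?case by (simp only: homotopy_col_eq[of b d x "Suc n"])
qed

lemma lin_boundary_class_mult_cycle:
  assumes "lin_cycle m b d n p z"
  shows "lin_boundary_class m b d n (Suc p) (\<lambda>j. x * z j)"
proof -
  have z: "z \<in> free_mod b n" "in_pow_mod m p z" "in_pow_mod m (p + 2) (diff b d n z)"
    using assms by (auto simp: lin_cycle_def)
  let ?y = "homotopy b d x (Suc n) z"
  have "?y \<in> free_mod b (Suc n)"
    using homotopy_col_spec by (simp add: lin_ext_in_free_mod)
  moreover have "in_pow_mod m p ?y" using z(2) by (rule in_pow_mod_homotopy)
  moreover have "(\<lambda>j. x * z j - diff b d (Suc n) ?y j) = homotopy b d x n (diff b d n z)"
    using homotopy_identity_if_cols[OF _ z(1)] homotopy_col_spec by simp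
  with z(3) have "in_pow_mod m (p + 2) (\<lambda>j. x * z j - diff b d (Suc n) ?y j)"
    by (simp add: in_pow_mod_homotopy)
  ultimately show ?thesis unfolding lin_boundary_class_def by auto
qed

end

end

lemma lin_boundary_class_ideal_pow_mult_cycle:
  assumes "minimal_free_resolution_of_residue_field m b d eps" "is_ideal m"
    and z: "lin_cycle m b d n p z" and a: "a \<in> ideal_pow m (Suc k)"
  shows "lin_boundary_class m b d n (p + Suc k) (\<lambda>j. a * z j)"
proof -
  from a have "a \<in> ideal_prod m (ideal_pow m k)" by simp
  then show ?thesis
  proof (induction a rule: ideal_prod.induct)
    case zero
    then show ?case using lin_boundary_class_zero by simp
  next
    case (step x c a')
    have "lin_boundary_class m b d n (p + Suc k) (\<lambda>j. c * (x * z j))"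
      using lin_boundary_class_scale[OF lin_boundary_class_mult_cycle[OF assms(1,2) step(1) z] step(2)]
      by simp
    from lin_boundary_class_add[OF this step.IH] show ?case
      by (simp add: algebra_simps)
  qed
qed

theorem corollary2p5:
  fixes m :: "'a::comm_ring_1 set"
    and b :: "nat \<Rightarrow> nat"
    and d :: "nat \<Rightarrow> nat \<Rightarrow> nat \<Rightarrow> 'a"
    and eps :: "(nat \<Rightarrow> 'a) \<Rightarrow> 'a"
  assumes "noetherian_ring TYPE('a)"
    and "local_ring_max m"
    and "minimal_free_resolution_of_residue_field m b d eps"
  shows "\<forall>n. mstar_kills_lin_homology m b d n"
proof (intro allI)
  fix n
  have "is_ideal m" using assms(2) by (simp add: local_ring_max_def)
  show "mstar_kills_lin_homology m b d n"
    unfolding mstar_kills_lin_homology_def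
  proof (intro allI impI)
    fix p i a z
    assume "1 \<le> i" "a \<in> ideal_pow m i" "lin_cycle m b d n p z"
    then obtain k where "i = Suc k" "a \<in> ideal_pow m (Suc k)" by (cases i) auto
    with lin_boundary_class_ideal_pow_mult_cycle[OF assms(3) \<open>is_ideal m\<close> \<open>lin_cycle m b d n p z\<close>]
    show "lin_boundary_class m b d n (p + i) (\<lambda>j. a * z j)" by simp
  qed
qed

end
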